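(* The set of synthetic flag positroids on $[n]$ equals the set of realizable flag positroids on $[n]$. Equivalently: a collection of subsets of $[n]$ is of the form $\{I\subseteq[n]: P_I(F)\neq 0\}$ for some $F\in\mathrm{Fl}_n^{\ge 0}$ if and only if it is of the form $\{I\subseteq[n]: P_I(F)\neq 0\}$ for some $F\in\mathrm{Fl}_n$ all of whose Plücker coordinates are nonnegative.
   Context: $\mathrm{Fl}_n$ is the real complete flag variety, flags represented by invertible $n\times n$ real matrices $M$ (the $i$-th subspace is the span of the top $i$ rows; representatives differ by left multiplication by invertible lower triangular matrices). $P_I(M)$ is the minor of $M$ in rows $1,\dots,|I|$ and columns $I$. "All Plücker coordinates of $F$ nonnegative" means some representing matrix has all $P_I\ge 0$. $\mathrm{Fl}_n^{\ge0}$ is the Euclidean closure of the set of flags having a totally positive representing matrix (all minors positive). A realizable flag positroid is the collection of indices of nonzero Plücker coordinates of a flag in $\mathrm{Fl}_n^{\ge 0}$ (a flag matroid); a synthetic flag positroid is the collection of indices of nonzero Plücker coordinates of a flag $F\in\mathrm{Fl}_n$ with $P_I(F)\ge 0$ for all $I\subseteq[n]$. *)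

theory Defs
  imports "HOL-Analysis.Analysis" "HOL-Combinatorics.Permutations"
begin

text \<open>Square n x n real matrices are represented as functions nat => nat => real,
  with indices 0..n-1 (only entries with i,j < n are meaningful).
  The ground set [n] is represented as {0..<n}.\<close>

type_synonym mat = "nat \<Rightarrow> nat \<Rightarrow> real"

definition mat_mult :: "nat \<Rightarrow> mat \<Rightarrow> mat \<Rightarrow> mat" where
  "mat_mult n A B = (\<lambda>i j. \<Sum>k<n. A i k * B k j)"

definition mat_id :: mat where
  "mat_id = (\<lambda>i j. if i = j then 1 else 0)"

definition mat_invertible :: "nat \<Rightarrow> mat \<Rightarrow> bool" where
  "mat_invertible n A \<longleftrightarrow> (\<exists>B. \<forall>i<n. \<forall>j<n.
      mat_mult n A B i j = mat_id i j \<and> mat_mult n B A i j = mat_id i j)"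

definition lower_triangular :: "nat \<Rightarrow> mat \<Rightarrow> bool" where
  "lower_triangular n L \<longleftrightarrow> (\<forall>i<n. \<forall>j<n. i < j \<longrightarrow> L i j = 0)"

definition minor_det :: "mat \<Rightarrow> nat \<Rightarrow> (nat \<Rightarrow> nat) \<Rightarrow> (nat \<Rightarrow> nat) \<Rightarrow> real" where
  "minor_det M k r c =
     (\<Sum>p | p permutes {0..<k}. of_int (sign p) * (\<Prod>i<k. M (r i) (c (p i))))"

text \<open>Pluecker coordinate P_I(M): minor in rows 1..|I| (here 0..|I|-1) and columns I
  (in increasing order).\<close>
definition plucker :: "mat \<Rightarrow> nat set \<Rightarrow> real" where
  "plucker M I = minor_det M (card I) (\<lambda>i. i) (\<lambda>j. sorted_list_of_set I ! j)"

definition totally_positive :: "nat \<Rightarrow> mat \<Rightarrow> bool" where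
  "totally_positive n M \<longleftrightarrow>
     (\<forall>R C. R \<subseteq> {0..<n} \<and> C \<subseteq> {0..<n} \<and> card R = card C \<and> R \<noteq> {} \<longrightarrow>
        minor_det M (card R) (\<lambda>i. sorted_list_of_set R ! i) (\<lambda>j. sorted_list_of_set C ! j) > 0)"

text \<open>Two invertible matrices represent the same flag iff they differ by left multiplication
  by an invertible lower triangular matrix.\<close>
definition same_flag :: "nat \<Rightarrow> mat \<Rightarrow> mat \<Rightarrow> bool" where
  "same_flag n M M' \<longleftrightarrow> (\<exists>L. mat_invertible n L \<and> lower_triangular n L \<and>
      (\<forall>i<n. \<forall>j<n. M' i j = mat_mult n L M i j))"

text \<open>The flag represented by M lies in Fl_n^{>=0}: the closure of the set of flags having a
  totally positive representative. Since GL_n -> Fl_n is an open quotient map, this means M is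
  an entrywise limit of matrices each representing a flag with a totally positive
  representative.\<close>
definition in_tnn_flag :: "nat \<Rightarrow> mat \<Rightarrow> bool" where
  "in_tnn_flag n M \<longleftrightarrow> mat_invertible n M \<and>
     (\<exists>X :: nat \<Rightarrow> mat. (\<forall>k. \<exists>N. totally_positive n N \<and> same_flag n N (X k)) \<and>
        (\<forall>i<n. \<forall>j<n. (\<lambda>k. X k i j) \<longlonglongrightarrow> M i j))"

definition nonzero_plucker :: "nat \<Rightarrow> mat \<Rightarrow> nat set set" where
  "nonzero_plucker n M = {I. I \<subseteq> {0..<n} \<and> plucker M I \<noteq> 0}"

definition realizable_flag_positroids :: "nat \<Rightarrow> nat set set set" where
  "realizable_flag_positroids n = {nonzero_plucker n M | M. in_tnn_flag n M}"

text \<open>Flags with all Pluecker coordinates nonnegative: some representative has all P_I >= 0.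
  (The set of nonzero coordinates does not depend on the representative.)\<close>
definition synthetic_flag_positroids :: "nat \<Rightarrow> nat set set set" where
  "synthetic_flag_positroids n = {nonzero_plucker n M | M. mat_invertible n M \<and>
      (\<exists>M'. same_flag n M M' \<and> (\<forall>I. I \<subseteq> {0..<n} \<longrightarrow> plucker M' I \<ge> 0))}"

end

theory Submission
  imports Defs "Jordan_Normal_Form.Determinant"
begin

text \<open>
  Left multiplication by a lower triangular L multiplies P_I by the leading principal minor of L
  of size |I|. Hence in a flag with a totally positive representative, Pluecker coordinates of
  equal size have a common strict sign; in a limit of such flags they have a common weak sign,
  and rescaling the rows by suitable signs makes all of them nonnegative.

  Conversely, let all P_I(M) be nonnegative and put G(x) = (x^((i-j)^2)). Then P_C(M G(x)) is a
  polynomial in x whose terms are minors of M in the top |C| rows, one for each assignment of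
  columns of M to the columns in C, with the cost of the assignment as exponent. As (u - v)^2 is a
  strict Monge array, swapping an inversion of an assignment lowers its cost and only flips the
  sign of its minor. So the terms of lowest order come from increasing assignments, i.e. they are
  Pluecker coordinates of M, and M G(x) has positive Pluecker coordinates for small x > 0. The
  same argument shows that A(x) M G(x), with A(x) lower triangular and A(x)_ij = x^((n-i)j), is
  totally positive for small x > 0. It represents the same flag as M G(x), which tends to M.
\<close>

section \<open>Minors\<close>

definition submatrix :: "Defs.mat \<Rightarrow> nat \<Rightarrow> (nat \<Rightarrow> nat) \<Rightarrow> (nat \<Rightarrow> nat) \<Rightarrow> real Matrix.mat" where
  "submatrix M k r c = Matrix.mat k k (\<lambda>(i, j). M (r i) (c j))"

lemma submatrix_carrier: "submatrix M k r c \<in> carrier_mat k k"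
  unfolding submatrix_def by simp

lemma minor_det_eq_det: "minor_det M k r c = Determinant.det (submatrix M k r c)"
  unfolding minor_det_def Determinant.det_def submatrix_def
  by (auto intro!: sum.cong prod.cong simp: atLeast0LessThan permutes_in_image)

lemma minor_det_cong:
  assumes "\<And>i j. i < k \<Longrightarrow> j < k \<Longrightarrow> M (r i) (c j) = M' (r' i) (c' j)"
  shows "minor_det M k r c = minor_det M' k r' c'"
  unfolding minor_det_def
  by (intro sum.cong refl arg_cong2[where f = "(*)"] prod.cong) (auto simp: assms permutes_in_image)

lemma minor_det_transpose: "minor_det M k r c = minor_det (\<lambda>i j. M j i) k c r"
proof -
  have "transpose_mat (submatrix M k r c) = submatrix (\<lambda>i j. M j i) k c r"
    unfolding submatrix_def by (rule eq_matI) auto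
  then show ?thesis
    unfolding minor_det_eq_det using det_transpose[OF submatrix_carrier, of M k r c] by simp
qed

lemma transpose_less: "a < k \<Longrightarrow> b < k \<Longrightarrow> i < k \<Longrightarrow> Transposition.transpose a b i < k"
  by (simp add: Transposition.transpose_def)

lemma minor_det_swap_rows:
  assumes "a < k" "b < k" "a \<noteq> b"
  shows "minor_det M k (r \<circ> Transposition.transpose a b) c = - minor_det M k r c"
proof -
  let ?p = "Transposition.transpose a b"
  have p: "?p permutes {0..<k}"
    using assms by (intro permutes_swap_id) auto
  have "Matrix.mat k k (\<lambda>(i, j). submatrix M k r c $$ (?p i, j)) = submatrix M k (r \<circ> ?p) c"
    unfolding submatrix_def using assms by (intro eq_matI) (auto simp: transpose_less)
  moreover have "Determinant.det (Matrix.mat k k (\<lambda>(i, j). submatrix M k r c $$ (?p i, j)))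
      = of_int (sign ?p) * Determinant.det (submatrix M k r c)"
    by (rule det_permute_rows[OF submatrix_carrier p])
  ultimately show ?thesis
    using assms unfolding minor_det_eq_det by (simp add: sign_swap_id)
qed

lemma minor_det_swap_cols:
  assumes "a < k" "b < k" "a \<noteq> b"
  shows "minor_det M k r (c \<circ> Transposition.transpose a b) = - minor_det M k r c"
  using minor_det_swap_rows[OF assms, of "\<lambda>i j. M j i" c r]
  by (simp add: minor_det_transpose[of M k r])

lemma minor_det_repeated_row:
  assumes "a < k" "b < k" "a \<noteq> b" "r a = r b"
  shows "minor_det M k r c = 0"
proof -
  have "Matrix.row (submatrix M k r c) a = Matrix.row (submatrix M k r c) b"
    unfolding submatrix_def using assms by (intro eq_vecI) auto
  then show ?thesis
    unfolding minor_det_eq_det using det_identical_rows[OF submatrix_carrier assms(3,1,2)] by simp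
qed

lemma minor_det_repeated_col:
  assumes "a < k" "b < k" "a \<noteq> b" "c a = c b"
  shows "minor_det M k r c = 0"
  using minor_det_repeated_row[OF assms, of "\<lambda>i j. M j i" r] by (simp add: minor_det_transpose[of M k r])

lemma minor_det_restrict_rows: "minor_det M k (restrict r {..<k}) c = minor_det M k r c"
  by (intro minor_det_cong) simp

lemma minor_det_restrict_cols: "minor_det M k r (restrict c {..<k}) = minor_det M k r c"
  by (intro minor_det_cong) simp

lemma minor_det_id: "minor_det mat_id k (\<lambda>i. i) (\<lambda>i. i) = 1"
proof -
  have "submatrix mat_id k (\<lambda>i. i) (\<lambda>i. i) = 1\<^sub>m k"
    unfolding submatrix_def mat_id_def by (rule eq_matI) auto
  then show ?thesis
    unfolding minor_det_eq_det by simp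
qed

lemma minor_det_0: "minor_det M 0 r c = 1"
  unfolding minor_det_def by simp

lemma minor_det_mult_expand_rows:
  "minor_det (mat_mult n A Y) k r c =
     (\<Sum>f\<in>{..<k} \<rightarrow>\<^sub>E {..<n}. (\<Prod>a<k. A (r a) (f a)) * minor_det Y k f c)"
proof -
  let ?F = "{..<k} \<rightarrow>\<^sub>E {..<n}"
  let ?P = "{p. p permutes {0..<k}}"
  have "minor_det (mat_mult n A Y) k r c =
      (\<Sum>p\<in>?P. of_int (sign p) * (\<Prod>a<k. \<Sum>l<n. A (r a) l * Y l (c (p a))))"
    unfolding minor_det_def mat_mult_def by simp
  also have "\<dots> = (\<Sum>p\<in>?P. of_int (sign p) * (\<Sum>f\<in>?F. \<Prod>a<k. A (r a) (f a) * Y (f a) (c (p a))))"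
    by (subst prod_sum_PiE) auto
  also have "\<dots> = (\<Sum>p\<in>?P. \<Sum>f\<in>?F.
      (\<Prod>a<k. A (r a) (f a)) * (of_int (sign p) * (\<Prod>a<k. Y (f a) (c (p a)))))"
    by (simp add: sum_distrib_left prod.distrib mult_ac)
  also have "\<dots> = (\<Sum>f\<in>?F. \<Sum>p\<in>?P.
      (\<Prod>a<k. A (r a) (f a)) * (of_int (sign p) * (\<Prod>a<k. Y (f a) (c (p a)))))"
    by (rule sum.swap)
  also have "\<dots> = (\<Sum>f\<in>?F. (\<Prod>a<k. A (r a) (f a)) * minor_det Y k f c)"
    unfolding minor_det_def by (simp add: sum_distrib_left)
  finally show ?thesis .
qed

lemma minor_det_mult_expand_cols:
  "minor_det (mat_mult n Y B) k r c =
     (\<Sum>g\<in>{..<k} \<rightarrow>\<^sub>E {..<n}. minor_det Y k r g * (\<Prod>b<k. B (g b) (c b)))"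
proof -
  have "(\<lambda>i j. mat_mult n Y B j i) = mat_mult n (\<lambda>i j. B j i) (\<lambda>i j. Y j i)"
    unfolding mat_mult_def by (auto simp: mult.commute)
  then show ?thesis
    using minor_det_mult_expand_rows[of n "\<lambda>i j. B j i" "\<lambda>i j. Y j i" k c r]
    by (simp add: minor_det_transpose[of _ k r] mult.commute)
qed

lemma mat_mult_assoc: "mat_mult n (mat_mult n A B) C = mat_mult n A (mat_mult n B C)"
  unfolding mat_mult_def
  by (auto simp: sum_distrib_left sum_distrib_right mult.assoc intro!: ext sum.swap)

lemma mat_mult_cong:
  assumes "\<And>l. l < n \<Longrightarrow> A i l = A' i l" "\<And>l. l < n \<Longrightarrow> B l j = B' l j"
  shows "mat_mult n A B i j = mat_mult n A' B' i j"
  unfolding mat_mult_def using assms by (intro sum.cong) auto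

lemma mat_mult_id_left:
  assumes "\<forall>i<n. \<forall>j<n. P i j = mat_id i j" "i < n"
  shows "mat_mult n P X i j = X i j"
proof -
  have "mat_mult n P X i j = (\<Sum>l<n. if l = i then X i j else 0)"
    unfolding mat_mult_def using assms by (intro sum.cong) (auto simp: mat_id_def)
  then show ?thesis
    using assms(2) by simp
qed

lemma mat_mult_id_right:
  assumes "\<forall>i<n. \<forall>j<n. P i j = mat_id i j" "j < n"
  shows "mat_mult n X P i j = X i j"
proof -
  have "mat_mult n X P i j = (\<Sum>l<n. if l = j then X i j else 0)"
    unfolding mat_mult_def using assms by (intro sum.cong) (auto simp: mat_id_def)
  then show ?thesis
    using assms(2) by simp
qed

lemma mat_invertible_cong:
  assumes "\<And>i j. i < n \<Longrightarrow> j < n \<Longrightarrow> A i j = A' i j" and "mat_invertible n A"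
  shows "mat_invertible n A'"
proof -
  obtain B where B: "\<forall>i<n. \<forall>j<n. mat_mult n A B i j = mat_id i j \<and> mat_mult n B A i j = mat_id i j"
    using assms(2) unfolding mat_invertible_def by blast
  have "mat_mult n A' B i j = mat_mult n A B i j" "mat_mult n B A' i j = mat_mult n B A i j"
    if "i < n" "j < n" for i j
    using assms(1) that by (auto intro: mat_mult_cong)
  then show ?thesis
    unfolding mat_invertible_def using B by metis
qed

lemma mat_invertible_mult:
  assumes "mat_invertible n A" "mat_invertible n B"
  shows "mat_invertible n (mat_mult n A B)"
proof -
  obtain A' where A': "\<forall>i<n. \<forall>j<n. mat_mult n A A' i j = mat_id i j \<and> mat_mult n A' A i j = mat_id i j"
    using assms(1) unfolding mat_invertible_def by blast
  obtain B' where B': "\<forall>i<n. \<forall>j<n. mat_mult n B B' i j = mat_id i j \<and> mat_mult n B' B i j = mat_id i j"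
    using assms(2) unfolding mat_invertible_def by blast
  have "mat_mult n (mat_mult n A B) (mat_mult n B' A') i j = mat_id i j"
    if "i < n" "j < n" for i j
  proof -
    have "mat_mult n (mat_mult n A B) (mat_mult n B' A') i j = mat_mult n A (mat_mult n (mat_mult n B B') A') i j"
      by (simp add: mat_mult_assoc)
    also have "\<dots> = mat_mult n A A' i j"
      using B' by (intro mat_mult_cong refl mat_mult_id_left) auto
    finally show ?thesis
      using A' that by simp
  qed
  moreover have "mat_mult n (mat_mult n B' A') (mat_mult n A B) i j = mat_id i j"
    if "i < n" "j < n" for i j
  proof -
    have "mat_mult n (mat_mult n B' A') (mat_mult n A B) i j = mat_mult n B' (mat_mult n (mat_mult n A' A) B) i j"
      by (simp add: mat_mult_assoc)
    also have "\<dots> = mat_mult n B' B i j"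
      using A' by (intro mat_mult_cong refl mat_mult_id_left) auto
    finally show ?thesis
      using B' that by simp
  qed
  ultimately show ?thesis
    unfolding mat_invertible_def by blast
qed

lemma invertible_top_rows_minor_nonzero:
  assumes "mat_invertible n M" "k \<le> n"
  shows "\<exists>g\<in>{..<k} \<rightarrow>\<^sub>E {..<n}. minor_det M k (\<lambda>i. i) g \<noteq> 0"
proof (rule ccontr)
  assume none: "\<not> ?thesis"
  obtain B where B: "\<forall>i<n. \<forall>j<n. mat_mult n M B i j = mat_id i j"
    using assms(1) unfolding mat_invertible_def by blast
  have "1 = minor_det mat_id k (\<lambda>i. i) (\<lambda>i. i)"
    by (simp add: minor_det_id)
  also have "\<dots> = minor_det (mat_mult n M B) k (\<lambda>i. i) (\<lambda>i. i)"
    using B assms(2) by (intro minor_det_cong) auto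
  also have "\<dots> = 0"
    using none by (simp add: minor_det_mult_expand_cols)
  finally show False
    by simp
qed

section \<open>Lower triangular matrices\<close>

lemma inj_on_le_self_imp_id:
  fixes f :: "nat \<Rightarrow> nat"
  assumes "\<forall>a<k. f a \<le> a" "inj_on f {..<k}" "a < k"
  shows "f a = a"
  using assms(3)
proof (induction a rule: less_induct)
  case (less a)
  show ?case
  proof (rule ccontr)
    assume "f a \<noteq> a"
    then have "f a < a"
      using assms(1) less.prems by (simp add: le_neq_implies_less)
    moreover have "f a < k"
      using \<open>f a < a\<close> less.prems by simp
    ultimately have "f (f a) = f a"
      using less.IH by blast
    then have "f a = a"
      using inj_onD[OF assms(2)] \<open>f a < k\<close> less.prems by simp
    with \<open>f a \<noteq> a\<close> show False
      by simp
  qed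
qed

lemma minor_det_lower_mult:
  assumes L: "lower_triangular n L" and "k \<le> n"
  shows "minor_det (mat_mult n L M) k (\<lambda>i. i) c = (\<Prod>a<k. L a a) * minor_det M k (\<lambda>i. i) c"
proof -
  let ?F = "{..<k} \<rightarrow>\<^sub>E {..<n}"
  let ?id = "restrict (\<lambda>a. a) {..<k}"
  have id: "?id \<in> ?F"
    using assms(2) by auto
  \<comment> \<open>Only the identity row assignment survives: the others either pick an entry of L above the
    diagonal or repeat a row of M.\<close>
  have vanish: "(\<Prod>a<k. L a (f a)) * minor_det M k f c = 0" if f: "f \<in> ?F - {?id}" for f
  proof (cases "\<exists>a<k. a < f a")
    case True
    then obtain a where "a < k" "a < f a"
      by auto
    moreover have "f a < n"
      using f \<open>a < k\<close> by auto
    ultimately have "L a (f a) = 0"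
      using L assms(2) unfolding lower_triangular_def by auto
    then show ?thesis
      using \<open>a < k\<close> by (auto simp: prod_zero_iff)
  next
    case False
    have "\<not> inj_on f {..<k}"
    proof
      assume "inj_on f {..<k}"
      then have "\<forall>a<k. f a = a"
        using False inj_on_le_self_imp_id[of k f] by (meson not_le)
      then have "f = ?id"
        using f id by (intro PiE_ext[of f "{..<k}"]) auto
      with f show False
        by simp
    qed
    then obtain a b where "a < k" "b < k" "a \<noteq> b" "f a = f b"
      unfolding inj_on_def by auto
    then show ?thesis
      by (simp add: minor_det_repeated_row)
  qed
  have "minor_det (mat_mult n L M) k (\<lambda>i. i) c = (\<Sum>f\<in>?F. (\<Prod>a<k. L a (f a)) * minor_det M k f c)"
    by (rule minor_det_mult_expand_rows)
  also have "\<dots> = (\<Prod>a<k. L a (?id a)) * minor_det M k ?id c"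
    using vanish id by (subst sum.remove[OF _ id]) (auto intro!: sum.neutral simp: finite_PiE)
  also have "\<dots> = (\<Prod>a<k. L a a) * minor_det M k (\<lambda>i. i) c"
    by (intro arg_cong2[where f = "(*)"] prod.cong minor_det_cong) auto
  finally show ?thesis .
qed

lemma lower_triangular_invertible_diag_nonzero:
  assumes L: "lower_triangular n L" "mat_invertible n L" and "a < n"
  shows "L a a \<noteq> 0"
proof
  assume "L a a = 0"
  obtain B where B: "\<forall>i<n. \<forall>j<n. mat_mult n L B i j = mat_id i j"
    using L(2) unfolding mat_invertible_def by blast
  have "(\<Prod>b<Suc a. L b b) * minor_det B (Suc a) (\<lambda>i. i) (\<lambda>i. i)
      = minor_det (mat_mult n L B) (Suc a) (\<lambda>i. i) (\<lambda>i. i)"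
    using minor_det_lower_mult[OF L(1), of "Suc a" B] \<open>a < n\<close> by simp
  also have "\<dots> = minor_det mat_id (Suc a) (\<lambda>i. i) (\<lambda>i. i)"
    using B \<open>a < n\<close> by (intro minor_det_cong) auto
  finally show False
    using \<open>L a a = 0\<close> by (simp add: minor_det_id)
qed

fun lower_inv :: "Defs.mat \<Rightarrow> Defs.mat" where
  "lower_inv A i j = (if i < j then 0 else if i = j then 1 / A i i
     else - (\<Sum>l\<in>{j..<i}. A i l * lower_inv A l j) / A i i)"

declare lower_inv.simps [simp del]

lemma lower_triangular_lower_inv: "lower_triangular n (lower_inv A)"
  unfolding lower_triangular_def by (simp add: lower_inv.simps)

lemma mat_mult_lower_inv:
  assumes L: "lower_triangular n A" and d: "\<forall>a<n. A a a \<noteq> 0" and "i < n" "j < n"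
  shows "mat_mult n A (lower_inv A) i j = mat_id i j"
proof -
  have "mat_mult n A (lower_inv A) i j = (\<Sum>l\<in>{j..i}. A i l * lower_inv A l j)"
    unfolding mat_mult_def
  proof (rule sum.mono_neutral_right)
    show "\<forall>l\<in>{..<n} - {j..i}. A i l * lower_inv A l j = 0"
      using L \<open>i < n\<close> unfolding lower_triangular_def by (auto simp: lower_inv.simps)
  qed (use \<open>i < n\<close> in auto)
  also have "\<dots> = mat_id i j"
  proof (cases "j < i")
    case True
    then have "{j..i} = insert i {j..<i}"
      by auto
    then show ?thesis
      using True d \<open>i < n\<close> by (simp add: lower_inv.simps[of A i j] mat_id_def)
  qed (use d \<open>i < n\<close> in \<open>auto simp: lower_inv.simps mat_id_def\<close>)
  finally show ?thesis .
qed

lemma lower_inv_inverse: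
  assumes L: "lower_triangular n A" and d: "\<forall>a<n. A a a \<noteq> 0" and ij: "i < n" "j < n"
  shows "mat_mult n A (lower_inv A) i j = mat_id i j" "mat_mult n (lower_inv A) A i j = mat_id i j"
proof -
  let ?B = "lower_inv A"
  let ?C = "lower_inv (lower_inv A)"
  have AB: "\<forall>i<n. \<forall>j<n. mat_mult n A ?B i j = mat_id i j"
    using mat_mult_lower_inv[OF L d] by blast
  have BC: "\<forall>i<n. \<forall>j<n. mat_mult n ?B ?C i j = mat_id i j"
    using mat_mult_lower_inv[OF lower_triangular_lower_inv] d by (simp add: lower_inv.simps)
  \<comment> \<open>A right inverse of the right inverse ?B of A is A itself.\<close>
  have AC: "A i j = ?C i j" if "i < n" "j < n" for i j
  proof -
    have "A i j = mat_mult n A (mat_mult n ?B ?C) i j"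
      using BC that by (simp add: mat_mult_id_right)
    also have "\<dots> = ?C i j"
      using AB that by (simp add: mat_mult_assoc[symmetric] mat_mult_id_left)
    finally show ?thesis .
  qed
  show "mat_mult n A ?B i j = mat_id i j"
    using AB ij by blast
  have "mat_mult n ?B A i j = mat_mult n ?B ?C i j"
    using AC ij by (intro mat_mult_cong) auto
  then show "mat_mult n ?B A i j = mat_id i j"
    using BC ij by simp
qed

lemma lower_triangular_invertible:
  assumes "lower_triangular n A" "\<forall>a<n. A a a \<noteq> 0"
  shows "mat_invertible n A"
  using lower_inv_inverse[OF assms] unfolding mat_invertible_def by blast

section \<open>Pluecker coordinates and flags\<close>

lemma card_le_of_subset_range: "I \<subseteq> {0..<n} \<Longrightarrow> card I \<le> n"
  using card_mono[of "{0..<n}" I] by simp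

lemma sorted_list_of_set_nth_strict_mono:
  "finite S \<Longrightarrow> strict_mono_on {..<card S} (\<lambda>j. sorted_list_of_set S ! j)"
  by (intro strict_mono_onI) (simp add: sorted_wrt_nth_less[OF strict_sorted_list_of_set])

lemma strict_mono_on_lessThan_ge:
  fixes f :: "nat \<Rightarrow> nat"
  assumes "strict_mono_on {..<k} f" "a < k"
  shows "a \<le> f a"
  using assms(2)
proof (induction a)
  case (Suc a)
  then show ?case
    using strict_mono_onD[OF assms(1), of a "Suc a"] by simp
qed simp

lemma sorted_list_of_set_nth_less:
  fixes S :: "nat set"
  assumes "S \<subseteq> {0..<n}" "j < card S"
  shows "sorted_list_of_set S ! j < n"
proof -
  have "finite S"
    by (rule finite_subset[OF assms(1)]) simp
  then have "sorted_list_of_set S ! j \<in> S"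
    using assms(2) by (metis nth_mem length_sorted_list_of_set set_sorted_list_of_set)
  then show ?thesis
    using assms(1) by auto
qed

lemma plucker_cong:
  assumes "\<And>i j. i < n \<Longrightarrow> j < n \<Longrightarrow> M i j = M' i j" "I \<subseteq> {0..<n}"
  shows "plucker M I = plucker M' I"
  unfolding plucker_def
  using assms sorted_list_of_set_nth_less[OF assms(2)] card_le_of_subset_range[OF assms(2)]
  by (intro minor_det_cong) auto

lemma plucker_empty [simp]: "plucker M {} = 1"
  unfolding plucker_def by (simp add: minor_det_0)

lemma plucker_lower_mult:
  assumes "lower_triangular n L" "I \<subseteq> {0..<n}"
  shows "plucker (mat_mult n L M) I = (\<Prod>a<card I. L a a) * plucker M I"
  unfolding plucker_def using assms by (intro minor_det_lower_mult card_le_of_subset_range)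

lemma minor_det_strict_mono_cols:
  assumes "strict_mono_on {..<k} g"
  shows "minor_det M k (\<lambda>i. i) g = plucker M (g ` {..<k})"
proof -
  have "inj_on g {..<k}"
    using assms strict_mono_on_imp_inj_on by blast
  then have card: "card (g ` {..<k}) = k"
    by (simp add: card_image)
  have "sorted_wrt (<) (map g [0..<k])"
    using strict_mono_onD[OF assms] by (auto simp: sorted_wrt_iff_nth_less)
  then have "sorted_list_of_set (g ` {..<k}) = map g [0..<k]"
    by (subst sorted_list_of_set_unique[symmetric]) (auto simp: card distinct_map)
  then show ?thesis
    unfolding plucker_def card by (intro minor_det_cong) auto
qed

lemma totally_positive_plucker_pos:
  assumes "totally_positive n N" "I \<subseteq> {0..<n}"
  shows "plucker N I > 0"
proof (cases "I = {}")
  case False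
  let ?R = "{0..<card I}"
  have "?R \<subseteq> {0..<n}" "card ?R = card I" "?R \<noteq> {}"
    using assms(2) False card_le_of_subset_range[OF assms(2)] finite_subset[OF assms(2)] by auto
  then have "minor_det N (card I) (\<lambda>i. sorted_list_of_set ?R ! i) (\<lambda>j. sorted_list_of_set I ! j) > 0"
    using assms unfolding totally_positive_def by (metis (no_types, lifting))
  moreover have "minor_det N (card I) (\<lambda>i. sorted_list_of_set ?R ! i) (\<lambda>j. sorted_list_of_set I ! j)
      = plucker N I"
    unfolding plucker_def by (intro minor_det_cong) auto
  ultimately show ?thesis
    by simp
qed simp

lemma plucker_tendsto:
  assumes "\<And>i j. i < n \<Longrightarrow> j < n \<Longrightarrow> (\<lambda>k. X k i j) \<longlonglongrightarrow> M i j" "I \<subseteq> {0..<n}"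
  shows "(\<lambda>k. plucker (X k) I) \<longlonglongrightarrow> plucker M I"
  unfolding plucker_def minor_det_def
proof (intro tendsto_sum tendsto_mult tendsto_const tendsto_prod)
  fix p i assume "p \<in> {p. p permutes {0..<card I}}" "i \<in> {..<card I}"
  then have "p i < card I"
    using permutes_in_image[of p "{0..<card I}" i] by auto
  then show "(\<lambda>k. X k i (sorted_list_of_set I ! p i)) \<longlonglongrightarrow> M i (sorted_list_of_set I ! p i)"
    using \<open>i \<in> {..<card I}\<close> card_le_of_subset_range[OF assms(2)]
      sorted_list_of_set_nth_less[OF assms(2)] by (intro assms(1)) auto
qed

lemma same_flag_plucker_scale:
  assumes "same_flag n M M'"
  obtains s where "\<And>j. j \<le> n \<Longrightarrow> s j \<noteq> 0"
    and "\<And>I. I \<subseteq> {0..<n} \<Longrightarrow> plucker M' I = s (card I) * plucker M I"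
proof -
  obtain L where L: "mat_invertible n L" "lower_triangular n L"
    and M': "\<forall>i<n. \<forall>j<n. M' i j = mat_mult n L M i j"
    using assms unfolding same_flag_def by blast
  show ?thesis
  proof
    show "(\<Prod>a<j. L a a) \<noteq> 0" if "j \<le> n" for j
      using lower_triangular_invertible_diag_nonzero[OF L(2,1)] that by (auto simp: prod_zero_iff)
    show "plucker M' I = (\<Prod>a<card I. L a a) * plucker M I" if "I \<subseteq> {0..<n}" for I
    proof -
      have "plucker M' I = plucker (mat_mult n L M) I"
        using M' that by (intro plucker_cong[of n]) auto
      then show ?thesis
        using plucker_lower_mult[OF L(2) that] by simp
    qed
  qed
qed

lemma nonzero_plucker_same_flag:
  assumes "same_flag n M M'"
  shows "nonzero_plucker n M' = nonzero_plucker n M"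
proof -
  obtain s where "\<And>j. j \<le> n \<Longrightarrow> s j \<noteq> 0"
    and "\<And>I. I \<subseteq> {0..<n} \<Longrightarrow> plucker M' I = s (card I) * plucker M I"
    using same_flag_plucker_scale[OF assms] by blast
  then show ?thesis
    unfolding nonzero_plucker_def using card_le_of_subset_range by auto
qed

lemma same_flag_invertible:
  assumes "same_flag n M M'" "mat_invertible n M"
  shows "mat_invertible n M'"
  using assms mat_invertible_mult[of n _ M] mat_invertible_cong[of n _ M']
  unfolding same_flag_def by metis

lemma same_flag_lower_mult:
  assumes "lower_triangular n L" "\<forall>a<n. L a a \<noteq> 0"
  shows "same_flag n M (mat_mult n L M)"
  unfolding same_flag_def using assms lower_triangular_invertible by blast

lemma same_flag_sym:
  assumes "same_flag n M M'"
  shows "same_flag n M' M"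
proof -
  obtain L where L: "mat_invertible n L" "lower_triangular n L"
    and M': "\<forall>i<n. \<forall>j<n. M' i j = mat_mult n L M i j"
    using assms unfolding same_flag_def by blast
  have d: "\<forall>a<n. L a a \<noteq> 0"
    using lower_triangular_invertible_diag_nonzero[OF L(2,1)] by blast
  have "M i j = mat_mult n (lower_inv L) M' i j" if "i < n" "j < n" for i j
  proof -
    have "mat_mult n (lower_inv L) M' i j = mat_mult n (lower_inv L) (mat_mult n L M) i j"
      using M' that by (intro mat_mult_cong) auto
    also have "\<dots> = mat_mult n (mat_mult n (lower_inv L) L) M i j"
      by (simp add: mat_mult_assoc)
    also have "\<dots> = M i j"
      using lower_inv_inverse(2)[OF L(2) d] that by (simp add: mat_mult_id_left)
    finally show ?thesis
      by simp
  qed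
  moreover have "mat_invertible n (lower_inv L)"
    using lower_triangular_invertible[OF lower_triangular_lower_inv] d by (simp add: lower_inv.simps)
  ultimately show ?thesis
    unfolding same_flag_def using lower_triangular_lower_inv by blast
qed

section \<open>Lowest-order terms\<close>

lemma eventually_sum_powers_pos:
  fixes e :: "'a \<Rightarrow> nat" and d :: "'a \<Rightarrow> real"
  assumes "finite F" "\<exists>f\<in>F. d f \<noteq> 0"
    and lowest_pos: "\<And>f. f \<in> F \<Longrightarrow> d f \<noteq> 0 \<Longrightarrow> (\<forall>g\<in>F. d g \<noteq> 0 \<longrightarrow> e f \<le> e g) \<Longrightarrow> d f > 0"
  shows "\<forall>\<^sub>F x in at_right 0. (\<Sum>f\<in>F. x ^ e f * d f) > 0"
proof -
  define S where "S = {f\<in>F. d f \<noteq> 0}"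
  have S: "finite S" "S \<noteq> {}"
    using assms(1,2) unfolding S_def by auto
  define m where "m = Min (e ` S)"
  have "m \<in> e ` S"
    unfolding m_def using S by (intro Min_in) auto
  then obtain f0 where f0: "f0 \<in> S" "e f0 = m"
    by blast
  have m_le: "m \<le> e f" if "f \<in> S" for f
    using S that unfolding m_def by auto
  have d_pos: "d f > 0" if "f \<in> S" "e f = m" for f
    using that m_le lowest_pos unfolding S_def by auto
  define h where "h x = (\<Sum>f\<in>S. x ^ (e f - m) * d f)" for x :: real
  have "(h \<longlongrightarrow> (\<Sum>f\<in>S. 0 ^ (e f - m) * d f)) (at_right 0)"
    unfolding h_def by (intro tendsto_intros)
  moreover have "(\<Sum>f\<in>S. 0 ^ (e f - m) * (d f :: real)) > 0"
  proof (rule sum_pos2[OF S(1) f0(1)])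
    show "0 < 0 ^ (e f0 - m) * d f0"
      using f0 d_pos by simp
    show "0 \<le> 0 ^ (e f - m) * d f" if "f \<in> S" for f
      using d_pos[OF that] m_le[OF that] by (cases "e f = m") (auto simp: less_imp_le power_0_left)
  qed
  ultimately have "\<forall>\<^sub>F x in at_right 0. h x > 0"
    by (rule order_tendstoD)
  then show ?thesis
    using eventually_at_right_less[of 0]
  proof eventually_elim
    case (elim x)
    have "(\<Sum>f\<in>F. x ^ e f * d f) = (\<Sum>f\<in>S. x ^ e f * d f)"
      unfolding S_def using assms(1) by (intro sum.mono_neutral_right) auto
    also have "\<dots> = x ^ m * h x"
      unfolding h_def sum_distrib_left
      by (intro sum.cong refl) (simp add: m_le power_add[symmetric] mult.assoc)
    finally show ?case
      using elim by simp
  qed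
qed

text \<open>A strict Monge array: \<open>\<phi> u b\<close> is the cost of putting the value \<open>u\<close> at position \<open>b\<close>,
  and for two values and two positions the sorted placement is strictly cheaper.\<close>

definition strict_monge :: "nat \<Rightarrow> (nat \<Rightarrow> nat \<Rightarrow> nat) \<Rightarrow> bool" where
  "strict_monge k \<phi> \<longleftrightarrow> (\<forall>a b u v. a < b \<longrightarrow> b < k \<longrightarrow> v < u \<longrightarrow> \<phi> v a + \<phi> u b < \<phi> u a + \<phi> v b)"

definition assignment_cost :: "(nat \<Rightarrow> nat \<Rightarrow> nat) \<Rightarrow> nat \<Rightarrow> (nat \<Rightarrow> nat) \<Rightarrow> nat" where
  "assignment_cost \<phi> k g = (\<Sum>b<k. \<phi> (g b) b)"

lemma strict_monge_square_dist:
  assumes "strict_mono_on {..<k} c"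
  shows "strict_monge k (\<lambda>u b. nat ((int u - int (c b))\<^sup>2))"
  unfolding strict_monge_def
proof (intro allI impI)
  fix a b u v :: nat
  assume "a < b" "b < k" "v < u"
  then have "0 < (int u - int v) * (int (c b) - int (c a))"
    using strict_mono_onD[OF assms, of a b] by simp
  then have "(int v - int (c a))\<^sup>2 + (int u - int (c b))\<^sup>2 < (int u - int (c a))\<^sup>2 + (int v - int (c b))\<^sup>2"
    by (simp add: power2_eq_square algebra_simps)
  then have "int (nat ((int v - int (c a))\<^sup>2) + nat ((int u - int (c b))\<^sup>2))
      < int (nat ((int u - int (c a))\<^sup>2) + nat ((int v - int (c b))\<^sup>2))"
    by simp
  then show "nat ((int v - int (c a))\<^sup>2) + nat ((int u - int (c b))\<^sup>2)
      < nat ((int u - int (c a))\<^sup>2) + nat ((int v - int (c b))\<^sup>2)"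
    by (simp only: of_nat_less_iff)
qed

lemma strict_monge_linear:
  assumes "\<And>a b. a < b \<Longrightarrow> b < k \<Longrightarrow> w b < w a"
  shows "strict_monge k (\<lambda>u a. w a * u)"
  unfolding strict_monge_def
proof (intro allI impI)
  fix a b u v :: nat
  assume "a < b" "b < k" "v < u"
  obtain s where "0 < s" "w a = w b + s"
    using less_imp_add_positive[OF assms[OF \<open>a < b\<close> \<open>b < k\<close>]] by metis
  moreover obtain t where "0 < t" "u = v + t"
    using less_imp_add_positive[OF \<open>v < u\<close>] by metis
  ultimately show "w a * v + w b * u < w a * u + w b * v"
    by (simp add: algebra_simps)
qed

lemma assignment_cost_swap_less:
  assumes "strict_monge k \<phi>" "a < b" "b < k" "g b < g a"
  shows "assignment_cost \<phi> k (g \<circ> Transposition.transpose a b) < assignment_cost \<phi> k g"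
proof -
  have split: "assignment_cost \<phi> k h = \<phi> (h a) a + \<phi> (h b) b + (\<Sum>i\<in>{..<k} - {a, b}. \<phi> (h i) i)" for h
    unfolding assignment_cost_def using assms(2,3)
    by (subst sum.subset_diff[of "{a, b}"]) auto
  have "(\<Sum>i\<in>{..<k} - {a, b}. \<phi> ((g \<circ> Transposition.transpose a b) i) i) = (\<Sum>i\<in>{..<k} - {a, b}. \<phi> (g i) i)"
    by (intro sum.cong) auto
  then show ?thesis
    using assms unfolding split[of g] split[of "g \<circ> _"] strict_monge_def by simp
qed

text \<open>Swapping is only required at inversions: resolving an inversion keeps a row assignment
  below a staircase, so the hypothesis survives restricting the coefficients to such assignments.\<close>

lemma min_cost_support_strict_mono:
  fixes d :: "(nat \<Rightarrow> nat) \<Rightarrow> real"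
  assumes monge: "strict_monge k \<phi>"
    and repeated: "\<And>g a b. g \<in> {..<k} \<rightarrow>\<^sub>E {..<n} \<Longrightarrow> a < b \<Longrightarrow> b < k \<Longrightarrow> g a = g b \<Longrightarrow> d g = 0"
    and swap: "\<And>g a b. g \<in> {..<k} \<rightarrow>\<^sub>E {..<n} \<Longrightarrow> a < b \<Longrightarrow> b < k \<Longrightarrow> g b < g a \<Longrightarrow> d g \<noteq> 0 \<Longrightarrow>
      d (restrict (g \<circ> Transposition.transpose a b) {..<k}) \<noteq> 0"
    and g: "g \<in> {..<k} \<rightarrow>\<^sub>E {..<n}" "d g \<noteq> 0"
    and min: "\<forall>h\<in>{..<k} \<rightarrow>\<^sub>E {..<n}. d h \<noteq> 0 \<longrightarrow> assignment_cost \<phi> k g \<le> assignment_cost \<phi> k h"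
  shows "strict_mono_on {..<k} g"
proof (rule strict_mono_onI, rule ccontr)
  fix a b assume ab: "a \<in> {..<k}" "b \<in> {..<k}" "a < b" and "\<not> g a < g b"
  then consider "g a = g b" | "g b < g a"
    by linarith
  then show False
  proof cases
    case 1
    then show False
      using repeated g ab by auto
  next
    case 2
    let ?g' = "restrict (g \<circ> Transposition.transpose a b) {..<k}"
    have "?g' \<in> {..<k} \<rightarrow>\<^sub>E {..<n}"
      using g(1) ab transpose_less[of a k b] by (simp add: restrict_PiE_iff PiE_iff)
    moreover have "assignment_cost \<phi> k ?g' = assignment_cost \<phi> k (g \<circ> Transposition.transpose a b)"
      unfolding assignment_cost_def by simp
    moreover have "b < k"
      using ab by simp
    then have "d ?g' \<noteq> 0"
      using swap[OF g(1) ab(3) _ 2 g(2)] by simp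
    ultimately have "assignment_cost \<phi> k g \<le> assignment_cost \<phi> k (g \<circ> Transposition.transpose a b)"
      using min by metis
    then show False
      using assignment_cost_swap_less[OF monge ab(3) \<open>b < k\<close> 2] by simp
  qed
qed

lemma eventually_assignment_sum_pos:
  fixes d :: "(nat \<Rightarrow> nat) \<Rightarrow> real"
  assumes monge: "strict_monge k \<phi>"
    and repeated: "\<And>g a b. g \<in> {..<k} \<rightarrow>\<^sub>E {..<n} \<Longrightarrow> a < b \<Longrightarrow> b < k \<Longrightarrow> g a = g b \<Longrightarrow> d g = 0"
    and swap: "\<And>g a b. g \<in> {..<k} \<rightarrow>\<^sub>E {..<n} \<Longrightarrow> a < b \<Longrightarrow> b < k \<Longrightarrow> g b < g a \<Longrightarrow> d g \<noteq> 0 \<Longrightarrow>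
      d (restrict (g \<circ> Transposition.transpose a b) {..<k}) \<noteq> 0"
    and increasing_pos: "\<And>g. g \<in> {..<k} \<rightarrow>\<^sub>E {..<n} \<Longrightarrow> strict_mono_on {..<k} g \<Longrightarrow> d g \<noteq> 0 \<Longrightarrow>
      \<forall>h\<in>{..<k} \<rightarrow>\<^sub>E {..<n}. d h \<noteq> 0 \<longrightarrow> assignment_cost \<phi> k g \<le> assignment_cost \<phi> k h \<Longrightarrow> d g > 0"
    and nonzero: "\<exists>g\<in>{..<k} \<rightarrow>\<^sub>E {..<n}. d g \<noteq> 0"
  shows "\<forall>\<^sub>F x in at_right 0. (\<Sum>g\<in>{..<k} \<rightarrow>\<^sub>E {..<n}. x ^ assignment_cost \<phi> k g * d g) > 0"
proof (rule eventually_sum_powers_pos[OF _ nonzero])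
  fix g assume "g \<in> {..<k} \<rightarrow>\<^sub>E {..<n}" "d g \<noteq> 0"
    "\<forall>h\<in>{..<k} \<rightarrow>\<^sub>E {..<n}. d h \<noteq> 0 \<longrightarrow> assignment_cost \<phi> k g \<le> assignment_cost \<phi> k h"
  then show "d g > 0"
    by (intro increasing_pos min_cost_support_strict_mono[where d = d, OF monge repeated swap])
qed (simp add: finite_PiE)

section \<open>Approximation by totally positive flags\<close>

definition gaussian_mat :: "real \<Rightarrow> Defs.mat" where
  "gaussian_mat x i j = x ^ nat ((int i - int j)\<^sup>2)"

lemma eventually_plucker_mult_gaussian_pos:
  assumes inv: "mat_invertible n M" and nonneg: "\<And>I. I \<subseteq> {0..<n} \<Longrightarrow> plucker M I \<ge> 0"
    and C: "C \<subseteq> {0..<n}"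
  shows "\<forall>\<^sub>F x in at_right 0. plucker (mat_mult n M (gaussian_mat x)) C > 0"
proof -
  define k where "k = card C"
  define c where "c j = sorted_list_of_set C ! j" for j
  define \<phi> where "\<phi> u b = nat ((int u - int (c b))\<^sup>2)" for u b
  define d where "d g = minor_det M k (\<lambda>i. i) g" for g
  have expand: "plucker (mat_mult n M (gaussian_mat x)) C
      = (\<Sum>g\<in>{..<k} \<rightarrow>\<^sub>E {..<n}. x ^ assignment_cost \<phi> k g * d g)" for x
    unfolding plucker_def minor_det_mult_expand_cols k_def[symmetric] c_def[symmetric]
    by (simp add: assignment_cost_def \<phi>_def d_def gaussian_mat_def power_sum mult.commute)
  have monge: "strict_monge k \<phi>"
    unfolding \<phi>_def k_def c_def using finite_subset[OF C]
    by (intro strict_monge_square_dist sorted_list_of_set_nth_strict_mono) auto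
  show ?thesis
    unfolding expand
  proof (rule eventually_assignment_sum_pos[OF monge])
    fix g :: "nat \<Rightarrow> nat" and a b :: nat
    assume "a < b" "b < k" "g a = g b"
    then show "d g = 0"
      unfolding d_def by (intro minor_det_repeated_col[of a k b]) auto
  next
    fix g :: "nat \<Rightarrow> nat" and a b :: nat
    assume "a < b" "b < k" "d g \<noteq> 0"
    then show "d (restrict (g \<circ> Transposition.transpose a b) {..<k}) \<noteq> 0"
      unfolding d_def by (simp add: minor_det_restrict_cols minor_det_swap_cols)
  next
    fix g assume g: "g \<in> {..<k} \<rightarrow>\<^sub>E {..<n}" "strict_mono_on {..<k} g" "d g \<noteq> 0"
    have "d g = plucker M (g ` {..<k})"
      unfolding d_def using g(2) by (rule minor_det_strict_mono_cols)
    moreover have "g ` {..<k} \<subseteq> {0..<n}"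
      using PiE_mem[OF g(1)] by auto
    ultimately have "d g \<ge> 0"
      using nonneg by simp
    then show "d g > 0"
      using g(3) by simp
  next
    show "\<exists>g\<in>{..<k} \<rightarrow>\<^sub>E {..<n}. d g \<noteq> 0"
      unfolding d_def k_def using inv C by (intro invertible_top_rows_minor_nonzero card_le_of_subset_range)
  qed
qed

definition lower_power_mat :: "nat \<Rightarrow> real \<Rightarrow> Defs.mat" where
  "lower_power_mat n x i j = (if j \<le> i then x ^ ((n - i) * j) else 0)"

definition below_staircase :: "nat \<Rightarrow> (nat \<Rightarrow> nat) \<Rightarrow> (nat \<Rightarrow> nat) \<Rightarrow> bool" where
  "below_staircase k r f \<longleftrightarrow> (\<forall>a<k. f a \<le> r a)"

lemma minor_det_lower_power_mult_expand:
  "minor_det (mat_mult n (lower_power_mat n x) Y) k r c =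
     (\<Sum>f\<in>{..<k} \<rightarrow>\<^sub>E {..<n}. x ^ assignment_cost (\<lambda>u a. (n - r a) * u) k f *
        (if below_staircase k r f then minor_det Y k f c else 0))"
  unfolding minor_det_mult_expand_rows
proof (intro sum.cong refl)
  fix f
  show "(\<Prod>a<k. lower_power_mat n x (r a) (f a)) * minor_det Y k f c
      = x ^ assignment_cost (\<lambda>u a. (n - r a) * u) k f * (if below_staircase k r f then minor_det Y k f c else 0)"
  proof (cases "below_staircase k r f")
    case True
    then show ?thesis
      unfolding assignment_cost_def below_staircase_def lower_power_mat_def
      by (simp add: power_sum[symmetric] mult.commute)
  next
    case False
    then show ?thesis
      unfolding below_staircase_def lower_power_mat_def by (auto simp: prod_zero_iff)
  qed
qed

lemma below_staircase_swap:
  assumes "strict_mono_on {..<k} r" "below_staircase k r g" "a < b" "b < k" "g b < g a"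
  shows "below_staircase k r (restrict (g \<circ> Transposition.transpose a b) {..<k})"
proof -
  have "g a \<le> r a" "r a < r b"
    using assms strict_mono_onD[OF assms(1), of a b] unfolding below_staircase_def by auto
  then have "g a \<le> r b" "g b \<le> r a"
    using \<open>g b < g a\<close> by linarith+
  then show ?thesis
    using assms(2) unfolding below_staircase_def Transposition.transpose_def by auto
qed

lemma increasing_assignment_cost_le_id_imp_id:
  assumes "\<And>b. b < k \<Longrightarrow> 0 < w b" "strict_mono_on {..<k} f"
    and "assignment_cost (\<lambda>u b. w b * u) k f \<le> assignment_cost (\<lambda>u b. w b * u) k (\<lambda>b. b)" "a < k"
  shows "f a = a"
proof (rule ccontr)
  assume "f a \<noteq> a"
  have "assignment_cost (\<lambda>u b. w b * u) k (\<lambda>b. b) < assignment_cost (\<lambda>u b. w b * u) k f"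
    unfolding assignment_cost_def
  proof (rule sum_strict_mono_ex1)
    show "\<forall>b\<in>{..<k}. w b * b \<le> w b * f b"
      using strict_mono_on_lessThan_ge[OF assms(2)] by simp
    have "a < f a"
      using strict_mono_on_lessThan_ge[OF assms(2,4)] \<open>f a \<noteq> a\<close> by simp
    then show "\<exists>b\<in>{..<k}. w b * b < w b * f b"
      using assms(1,4) by auto
  qed simp
  with assms(3) show False
    by simp
qed

lemma eventually_minor_lower_power_mult_pos:
  assumes r: "strict_mono_on {..<k} r" "\<And>a. a < k \<Longrightarrow> r a < n"
    and pos: "minor_det Y k (\<lambda>i. i) c > 0"
  shows "\<forall>\<^sub>F x in at_right 0. minor_det (mat_mult n (lower_power_mat n x) Y) k r c > 0"
proof -
  define \<phi> where "\<phi> = (\<lambda>u a. (n - r a) * u)"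
  define d where "d f = (if below_staircase k r f then minor_det Y k f c else 0)" for f
  let ?id = "restrict (\<lambda>a. a) {..<k}"
  have monge: "strict_monge k \<phi>"
    unfolding \<phi>_def
    using strict_mono_onD[OF r(1)] r(2) by (intro strict_monge_linear) (simp add: diff_less_mono2)
  have "a < n" if "a < k" for a
    using strict_mono_on_lessThan_ge[OF r(1) that] r(2)[OF that] by simp
  then have id: "?id \<in> {..<k} \<rightarrow>\<^sub>E {..<n}" "d ?id = minor_det Y k (\<lambda>i. i) c"
    using strict_mono_on_lessThan_ge[OF r(1)]
    unfolding d_def below_staircase_def by (auto simp: minor_det_restrict_rows)
  have "\<forall>\<^sub>F x in at_right 0. (\<Sum>f\<in>{..<k} \<rightarrow>\<^sub>E {..<n}. x ^ assignment_cost \<phi> k f * d f) > 0"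
  proof (rule eventually_assignment_sum_pos[OF monge])
    fix f :: "nat \<Rightarrow> nat" and a b :: nat
    assume "a < b" "b < k" "f a = f b"
    then show "d f = 0"
      unfolding d_def by (auto intro: minor_det_repeated_row[of a k b])
  next
    fix f :: "nat \<Rightarrow> nat" and a b :: nat
    assume "a < b" "b < k" "f b < f a" "d f \<noteq> 0"
    then show "d (restrict (f \<circ> Transposition.transpose a b) {..<k}) \<noteq> 0"
      using below_staircase_swap[OF r(1), of f a b]
      unfolding d_def by (simp add: minor_det_restrict_rows minor_det_swap_rows split: if_splits)
  next
    fix f assume f: "strict_mono_on {..<k} f" "d f \<noteq> 0"
      and min: "\<forall>h\<in>{..<k} \<rightarrow>\<^sub>E {..<n}. d h \<noteq> 0 \<longrightarrow> assignment_cost \<phi> k f \<le> assignment_cost \<phi> k h"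
    \<comment> \<open>The identity has nonzero coefficient, so minimality forces \<open>f\<close> to be the identity.\<close>
    have "assignment_cost \<phi> k f \<le> assignment_cost \<phi> k ?id"
      using min id pos by simp
    then have le_id: "assignment_cost (\<lambda>u b. (n - r b) * u) k f \<le> assignment_cost (\<lambda>u b. (n - r b) * u) k (\<lambda>b. b)"
      unfolding \<phi>_def by (simp add: assignment_cost_def)
    have "f a = a" if "a < k" for a
      using increasing_assignment_cost_le_id_imp_id[where w = "\<lambda>b. n - r b", OF _ f(1) le_id that] r(2)
      by simp
    then have "d f = d ?id"
      unfolding d_def below_staircase_def by (auto intro!: minor_det_cong)
    then show "d f > 0"
      using id pos by simp
  next
    show "\<exists>f\<in>{..<k} \<rightarrow>\<^sub>E {..<n}. d f \<noteq> 0"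
      using id pos by (intro bexI[of _ ?id]) auto
  qed
  moreover have "minor_det (mat_mult n (lower_power_mat n x) Y) k r c
      = (\<Sum>f\<in>{..<k} \<rightarrow>\<^sub>E {..<n}. x ^ assignment_cost \<phi> k f * d f)" for x
    unfolding \<phi>_def d_def by (rule minor_det_lower_power_mult_expand)
  ultimately show ?thesis
    by simp
qed

lemma exists_totally_positive_same_flag:
  assumes pos: "\<And>C. C \<subseteq> {0..<n} \<Longrightarrow> plucker Y C > 0"
  obtains N where "totally_positive n N" "same_flag n N Y"
proof -
  let ?P = "\<lambda>x R C. card R = card C \<longrightarrow> minor_det (mat_mult n (lower_power_mat n x) Y)
      (card R) (\<lambda>i. sorted_list_of_set R ! i) (\<lambda>j. sorted_list_of_set C ! j) > 0"
  have "\<forall>\<^sub>F x in at_right 0. ?P x R C" if "R \<subseteq> {0..<n}" "C \<subseteq> {0..<n}" for R C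
  proof (cases "card R = card C")
    case True
    have "minor_det Y (card R) (\<lambda>i. i) (\<lambda>j. sorted_list_of_set C ! j) > 0"
      using pos[OF that(2)] unfolding plucker_def True .
    moreover have "strict_mono_on {..<card R} (\<lambda>i. sorted_list_of_set R ! i)"
      using finite_subset[OF that(1)] by (intro sorted_list_of_set_nth_strict_mono) simp
    ultimately have "\<forall>\<^sub>F x in at_right 0. minor_det (mat_mult n (lower_power_mat n x) Y)
        (card R) (\<lambda>i. sorted_list_of_set R ! i) (\<lambda>j. sorted_list_of_set C ! j) > 0"
      using sorted_list_of_set_nth_less[OF that(1)] by (intro eventually_minor_lower_power_mult_pos)
    then show ?thesis
      by (rule eventually_mono) (simp add: True)
  qed simp
  then have "\<forall>\<^sub>F x in at_right 0. \<forall>R\<in>Pow {0..<n}. \<forall>C\<in>Pow {0..<n}. ?P x R C"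
    by (intro eventually_ball_finite ballI) auto
  then have "\<forall>\<^sub>F x in at_right 0. x > 0 \<and> (\<forall>R\<in>Pow {0..<n}. \<forall>C\<in>Pow {0..<n}. ?P x R C)"
    using eventually_at_right_less[of 0] by (rule eventually_conj[rotated])
  then obtain x where x: "x > 0" "\<forall>R\<in>Pow {0..<n}. \<forall>C\<in>Pow {0..<n}. ?P x R C"
    using eventually_happens'[OF trivial_limit_at_right_real] by blast
  show ?thesis
  proof
    show "totally_positive n (mat_mult n (lower_power_mat n x) Y)"
      unfolding totally_positive_def using x(2) by auto
    have "same_flag n Y (mat_mult n (lower_power_mat n x) Y)"
      using x(1) by (intro same_flag_lower_mult) (auto simp: lower_triangular_def lower_power_mat_def)
    then show "same_flag n (mat_mult n (lower_power_mat n x) Y) Y"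
      by (rule same_flag_sym)
  qed
qed

lemma in_tnn_flag_if_plucker_nonneg:
  assumes inv: "mat_invertible n M" and nonneg: "\<And>I. I \<subseteq> {0..<n} \<Longrightarrow> plucker M I \<ge> 0"
  shows "in_tnn_flag n M"
proof -
  have "\<forall>\<^sub>F x in at_right 0. \<forall>C\<in>Pow {0..<n}. plucker (mat_mult n M (gaussian_mat x)) C > 0"
    using eventually_plucker_mult_gaussian_pos[OF assms] by (auto intro: eventually_ball_finite)
  then obtain b where "b > 0" and b: "\<And>x C. 0 < x \<Longrightarrow> x < b \<Longrightarrow> C \<subseteq> {0..<n} \<Longrightarrow>
      plucker (mat_mult n M (gaussian_mat x)) C > 0"
    unfolding eventually_at_right_field by auto
  define \<delta> where "\<delta> k = b / real (k + 2)" for k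
  have \<delta>: "0 < \<delta> k" "\<delta> k < b" for k
    using \<open>b > 0\<close> unfolding \<delta>_def by (auto simp: field_simps intro!: add_pos_nonneg)
  have "\<delta> \<longlonglongrightarrow> 0"
    unfolding \<delta>_def using LIMSEQ_ignore_initial_segment[OF lim_const_over_n[of b], of 2] by simp
  define X where "X k = mat_mult n M (gaussian_mat (\<delta> k))" for k
  have "\<exists>N. totally_positive n N \<and> same_flag n N (X k)" for k
    using exists_totally_positive_same_flag b[OF \<delta>(1) \<delta>(2)] unfolding X_def by metis
  moreover have "(\<lambda>k. X k i j) \<longlonglongrightarrow> M i j" if "j < n" for i j
  proof -
    have "(\<lambda>k. X k i j) \<longlonglongrightarrow> (\<Sum>l<n. M i l * 0 ^ nat ((int l - int j)\<^sup>2))"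
      unfolding X_def mat_mult_def gaussian_mat_def using \<open>\<delta> \<longlonglongrightarrow> 0\<close> by (intro tendsto_intros)
    also have "(\<Sum>l<n. M i l * 0 ^ nat ((int l - int j)\<^sup>2)) = mat_mult n M mat_id i j"
      unfolding mat_mult_def mat_id_def by (intro sum.cong) (auto simp: power_0_left)
    also have "\<dots> = M i j"
      using that by (simp add: mat_mult_id_right)
    finally show ?thesis .
  qed
  ultimately show ?thesis
    unfolding in_tnn_flag_def using inv by blast
qed

section \<open>Sign patterns of totally nonnegative flags\<close>

lemma totally_positive_same_flag_plucker_same_sign:
  assumes "totally_positive n N" "same_flag n N X"
    and IJ: "I \<subseteq> {0..<n}" "J \<subseteq> {0..<n}" "card I = card J"
  shows "plucker X I * plucker X J > 0"
proof -
  obtain s where "s (card I) \<noteq> 0"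
    and "\<And>I. I \<subseteq> {0..<n} \<Longrightarrow> plucker X I = s (card I) * plucker N I"
    using same_flag_plucker_scale[OF assms(2)] card_le_of_subset_range[OF IJ(1)] by metis
  then have "plucker X I * plucker X J = (s (card I))\<^sup>2 * (plucker N I * plucker N J)"
    using IJ by (simp add: power2_eq_square mult_ac)
  then show ?thesis
    using \<open>s (card I) \<noteq> 0\<close> totally_positive_plucker_pos[OF assms(1)] IJ by simp
qed

lemma in_tnn_flag_plucker_same_sign:
  assumes "in_tnn_flag n M" "I \<subseteq> {0..<n}" "J \<subseteq> {0..<n}" "card I = card J"
  shows "plucker M I * plucker M J \<ge> 0"
proof -
  obtain X where X: "\<And>k. \<exists>N. totally_positive n N \<and> same_flag n N (X k)"
    and lim: "\<And>i j. i < n \<Longrightarrow> j < n \<Longrightarrow> (\<lambda>k. X k i j) \<longlonglongrightarrow> M i j"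
    using assms(1) unfolding in_tnn_flag_def by blast
  have "(\<lambda>k. plucker (X k) I * plucker (X k) J) \<longlonglongrightarrow> plucker M I * plucker M J"
    using assms(2,3) lim by (intro tendsto_mult plucker_tendsto) auto
  moreover have "plucker (X k) I * plucker (X k) J \<ge> 0" for k
    using X[of k] assms(2-4) totally_positive_same_flag_plucker_same_sign by (meson less_imp_le)
  ultimately show ?thesis
    by (intro LIMSEQ_le_const) auto
qed

lemma exists_same_flag_plucker_nonneg:
  assumes same_sign: "\<And>I J. I \<subseteq> {0..<n} \<Longrightarrow> J \<subseteq> {0..<n} \<Longrightarrow> card I = card J \<Longrightarrow>
      plucker M I * plucker M J \<ge> 0"
  obtains M' where "same_flag n M M'" "\<And>I. I \<subseteq> {0..<n} \<Longrightarrow> plucker M' I \<ge> 0"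
proof -
  define t where "t j = (if \<exists>I. I \<subseteq> {0..<n} \<and> card I = j \<and> plucker M I < 0 then -1 else 1 :: real)" for j
  have t_sign: "t (card I) * plucker M I \<ge> 0" if I: "I \<subseteq> {0..<n}" for I
  proof (cases "\<exists>J. J \<subseteq> {0..<n} \<and> card J = card I \<and> plucker M J < 0")
    case True
    then obtain J where "J \<subseteq> {0..<n}" "card J = card I" "plucker M J < 0"
      by blast
    then have "plucker M I \<le> 0"
      using same_sign[OF I, of J] by (simp add: zero_le_mult_iff)
    then show ?thesis
      using True unfolding t_def by simp
  next
    case False
    then show ?thesis
      using I unfolding t_def by (auto simp: not_less)
  qed
  have "t 0 = 1"
    unfolding t_def using finite_subset[of _ "{0..<n}"] by auto
  \<comment> \<open>The leading principal minors of this diagonal matrix telescope to \<open>t\<close>.\<close>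
  define D where "D i j = (if i = j then t (Suc i) * t i else 0)" for i j
  have D_minor: "(\<Prod>a<j. D a a) = t j" for j
  proof (induction j)
    case (Suc j)
    have "t j * t j = 1"
      unfolding t_def by simp
    then show ?case
      using Suc by (simp add: D_def mult_ac)
  qed (simp add: \<open>t 0 = 1\<close>)
  have D: "lower_triangular n D" "\<forall>a<n. D a a \<noteq> 0"
    unfolding lower_triangular_def D_def t_def by auto
  show ?thesis
  proof
    show "same_flag n M (mat_mult n D M)"
      using D by (rule same_flag_lower_mult)
    show "plucker (mat_mult n D M) I \<ge> 0" if "I \<subseteq> {0..<n}" for I
      using t_sign[OF that] by (simp add: plucker_lower_mult[OF D(1) that] D_minor)
  qed
qed

theorem mainTheorem5:
  fixes n :: nat
  shows "synthetic_flag_positroids n = realizable_flag_positroids n"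
proof (intro equalityI subsetI)
  fix P assume "P \<in> synthetic_flag_positroids n"
  then obtain M M' where P: "P = nonzero_plucker n M" and M: "mat_invertible n M" "same_flag n M M'"
    and nonneg: "\<forall>I. I \<subseteq> {0..<n} \<longrightarrow> plucker M' I \<ge> 0"
    unfolding synthetic_flag_positroids_def by blast
  have "mat_invertible n M'"
    using same_flag_invertible[OF M(2,1)] .
  then have "in_tnn_flag n M'"
    by (rule in_tnn_flag_if_plucker_nonneg) (use nonneg in blast)
  moreover have "P = nonzero_plucker n M'"
    using P nonzero_plucker_same_flag[OF M(2)] by simp
  ultimately show "P \<in> realizable_flag_positroids n"
    unfolding realizable_flag_positroids_def by blast
next
  fix P assume "P \<in> realizable_flag_positroids n"
  then obtain M where P: "P = nonzero_plucker n M" and M: "in_tnn_flag n M"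
    unfolding realizable_flag_positroids_def by blast
  then obtain M' where "same_flag n M M'" "\<And>I. I \<subseteq> {0..<n} \<Longrightarrow> plucker M' I \<ge> 0"
    using exists_same_flag_plucker_nonneg in_tnn_flag_plucker_same_sign by metis
  moreover have "mat_invertible n M"
    using M unfolding in_tnn_flag_def by blast
  ultimately show "P \<in> synthetic_flag_positroids n"
    unfolding synthetic_flag_positroids_def P by blast
qed

end
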